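(* Let $\mathbf{S}$ be a symmetric positive definite $p\times p$ matrix, $\mathbf{S}\ne\mathbf{I}$, with eigenvalues $\omega_1\ge\cdots\ge\omega_p>0$, and let $f(\mathbf{\Theta})=-\ln\det\mathbf{\Theta}+\operatorname{tr}(\mathbf{S}\mathbf{\Theta})$ on symmetric positive definite matrices. For each $i$, let $r_i=\sum_{l=1}^p\omega_l-\sum_{j\ne i}(\ln\omega_{p-j+1}+1)$. Then $r_i>\ln\omega_{p-i+1}+1$, so the equation $-\ln\lambda+\lambda\omega_{p-i+1}=r_i$ has exactly two positive roots $\lambda_{i\min}<\lambda_{i\max}$. If $\mathbf{\Theta}$ is symmetric positive definite with eigenvalues $\lambda_1\ge\cdots\ge\lambda_p$ and $\lambda_i\notin[\lambda_{i\min},\lambda_{i\max}]$ for some $i$, then $f(\mathbf{\Theta})>f(\mathbf{I})=\operatorname{tr}(\mathbf{S})$. Consequently, if $\mathcal{C}$ is any set of symmetric positive definite matrices containing $\mathbf{I}$ and $\mathbf{\Theta}$ minimizes $f$ over $\mathcal{C}$, then $\lambda_i\in[\lambda_{i\min},\lambda_{i\max}]$ for all $i$ and $$\|\nabla f(\mathbf{\Theta})\|_F=\|\mathbf{S}-\mathbf{\Theta}^{-1}\|_F\le\sqrt{\sum_{i=1}^p\lambda_{i\min}^{-2}}+\|\mathbf{S}\|_F.$$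
   Context: $\|\cdot\|_F$ is the Frobenius norm. *)

theory Defs
  imports "Jordan_Normal_Form.Gauss_Jordan_Elimination" "Jordan_Normal_Form.Char_Poly"
begin

definition mtrace :: "real mat \<Rightarrow> real" where
  "mtrace A = (\<Sum>i<dim_row A. A $$ (i, i))"

definition frob_norm :: "real mat \<Rightarrow> real" where
  "frob_norm A = sqrt (\<Sum>i<dim_row A. \<Sum>j<dim_col A. (A $$ (i, j))\<^sup>2)"

definition minv :: "real mat \<Rightarrow> real mat" where
  "minv A = the (mat_inverse A)"

definition spd :: "nat \<Rightarrow> real mat \<Rightarrow> bool" where
  "spd p A \<longleftrightarrow> A \<in> carrier_mat p p \<and> transpose_mat A = A \<and>
     (\<forall>v \<in> carrier_vec p. v \<noteq> 0\<^sub>v p \<longrightarrow> v \<bullet> (A *\<^sub>v v) > 0)"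

(* ws is the list of eigenvalues of A (with algebraic multiplicity), in
   non-increasing order: ws ! 0 \<ge> ws ! 1 \<ge> ... *)
definition sorted_eigs :: "real mat \<Rightarrow> real list \<Rightarrow> bool" where
  "sorted_eigs A ws \<longleftrightarrow> length ws = dim_row A \<and> sorted_wrt (\<ge>) ws \<and>
     char_poly A = prod_list (map (\<lambda>w. [:-w, 1:]) ws)"

definition fobj :: "real mat \<Rightarrow> real mat \<Rightarrow> real" where
  "fobj S Th = - ln (det Th) + mtrace (S * Th)"

(* r_i (0-based index i, p = length om; paper's omega_{p-i+1} is om ! (p-1-i)) *)
definition rval :: "real list \<Rightarrow> nat \<Rightarrow> real" where
  "rval om i = sum_list om -
     (\<Sum>j\<in>{0..<length om} - {i}. ln (om ! (length om - 1 - j)) + 1)"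

definition root_set :: "real list \<Rightarrow> nat \<Rightarrow> real set" where
  "root_set om i = {x. x > 0 \<and> - ln x + x * (om ! (length om - 1 - i)) = rval om i}"

definition lam_min :: "real list \<Rightarrow> nat \<Rightarrow> real" where
  "lam_min om i = Min (root_set om i)"

definition lam_max :: "real list \<Rightarrow> nat \<Rightarrow> real" where
  "lam_max om i = Max (root_set om i)"

end

theory Submission
  imports Defs "HOL-Analysis.L2_Norm"
begin

text \<open>
  Diagonalise \<open>S = U diag(\<omega>) U\<^sup>T\<close> and \<open>\<Theta> = V diag(\<lambda>) V\<^sup>T\<close>. The squared entries of
  \<open>U\<^sup>T V\<close> form a doubly stochastic matrix, so a rearrangement argument gives
  \<open>tr(S\<Theta>) \<ge> \<Sigma>\<^sub>l \<lambda>\<^sub>l \<omega>\<^sub>p\<^sub>-\<^sub>l\<close>; with \<open>ln det \<Theta> = \<Sigma>\<^sub>l ln \<lambda>\<^sub>l\<close> this yields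
  \<open>f(\<Theta>) \<ge> \<Sigma>\<^sub>l g\<^sub>l(\<lambda>\<^sub>l)\<close> for \<open>g\<^sub>l(x) = -ln x + x \<omega>\<^sub>p\<^sub>-\<^sub>l\<close>. Each \<open>g\<^sub>l\<close> decreases and then
  increases, with minimum \<open>ln \<omega>\<^sub>p\<^sub>-\<^sub>l + 1\<close> at \<open>1/\<omega>\<^sub>p\<^sub>-\<^sub>l\<close>, and \<open>r\<^sub>i\<close> is chosen so that
  \<open>tr S = r\<^sub>i + \<Sigma>\<^sub>l\<^sub>\<noteq>\<^sub>i (ln \<omega>\<^sub>p\<^sub>-\<^sub>l + 1)\<close>. Hence \<open>f(\<Theta>) > tr S = f(I)\<close> as soon as
  \<open>g\<^sub>i(\<lambda>\<^sub>i) > r\<^sub>i\<close>, i.e. as soon as \<open>\<lambda>\<^sub>i\<close> lies outside the two roots of \<open>g\<^sub>i = r\<^sub>i\<close>; that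
  \<open>r\<^sub>i\<close> exceeds the minimum of \<open>g\<^sub>i\<close> is \<open>ln x \<le> x - 1\<close>, strict because some \<open>\<omega>\<^sub>k \<noteq> 1\<close>.
  For a minimiser every \<open>\<lambda>\<^sub>i \<ge> \<lambda>\<^sub>i\<^sub>m\<^sub>i\<^sub>n\<close>, and \<open>\<parallel>\<Theta>\<^sup>-\<^sup>1\<parallel>\<^sub>F = (\<Sigma> \<lambda>\<^sub>i\<^sup>-\<^sup>2)\<^sup>1\<^sup>/\<^sup>2\<close> together
  with the triangle inequality bounds the gradient. The spectral theorem for real symmetric
  matrices is obtained by Householder deflation.
\<close>

section \<open>Orthonormal matrices and Householder reflections\<close>

lemma real_sprod_self_pos_iff:
  fixes v :: "real vec"
  assumes "v \<in> carrier_vec n"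
  shows "0 < v \<bullet> v \<longleftrightarrow> v \<noteq> 0\<^sub>v n"
  using conjugate_square_greater_0_vec[OF assms] by simp

definition orthonormal_mat :: "nat \<Rightarrow> real mat \<Rightarrow> bool" where
  "orthonormal_mat n U \<longleftrightarrow> U \<in> carrier_mat n n \<and> transpose_mat U * U = 1\<^sub>m n"

lemma orthonormal_matD:
  assumes "orthonormal_mat n U"
  shows "U \<in> carrier_mat n n" "transpose_mat U * U = 1\<^sub>m n" "U * transpose_mat U = 1\<^sub>m n"
  using assms mat_mult_left_right_inverse[of "transpose_mat U" n U]
  unfolding orthonormal_mat_def by auto

lemma orthonormal_mat_transpose:
  assumes "orthonormal_mat n U"
  shows "orthonormal_mat n (transpose_mat U)"
  unfolding orthonormal_mat_def using orthonormal_matD[OF assms] by simp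

lemma orthonormal_mat_mult:
  assumes "orthonormal_mat n U" "orthonormal_mat n V"
  shows "orthonormal_mat n (U * V)"
proof -
  note U = orthonormal_matD[OF assms(1)] and V = orthonormal_matD[OF assms(2)]
  have "transpose_mat (U * V) * (U * V) = transpose_mat V * transpose_mat U * (U * V)"
    by (subst transpose_mult[OF U(1) V(1)]) (rule refl)
  also have "\<dots> = transpose_mat V * (transpose_mat U * (U * V))"
    by (rule assoc_mult_mat[of _ n n _ n _ n]) (use U V in auto)
  also have "transpose_mat U * (U * V) = (transpose_mat U * U) * V"
    by (rule assoc_mult_mat[symmetric, of _ n n _ n _ n]) (use U V in auto)
  finally show ?thesis using U V by (simp add: orthonormal_mat_def)
qed

lemma orthonormal_mat_row_sum_sq:
  assumes "orthonormal_mat n U" "k < n"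
  shows "(\<Sum>l<n. (U $$ (k, l))\<^sup>2) = 1"
proof -
  have "(U * transpose_mat U) $$ (k, k) = 1" using orthonormal_matD[OF assms(1)] assms(2) by simp
  thus ?thesis using orthonormal_matD(1)[OF assms(1)] assms(2)
    by (simp add: scalar_prod_def power2_eq_square lessThan_atLeast0)
qed

lemma orthonormal_mat_col_sum_sq:
  assumes "orthonormal_mat n U" "l < n"
  shows "(\<Sum>k<n. (U $$ (k, l))\<^sup>2) = 1"
  using orthonormal_mat_row_sum_sq[OF orthonormal_mat_transpose[OF assms(1)] assms(2)]
    orthonormal_matD(1)[OF assms(1)] assms(2) by simp

lemma sum_of_bool_eq_mult:
  fixes f :: "nat \<Rightarrow> 'a :: comm_semiring_1"
  assumes "i < n"
  shows "(\<Sum>k<n. of_bool (i = k) * f k) = f i"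
proof -
  have "{..<n} \<inter> {k. i = k} = {i}" using assms by auto
  thus ?thesis by simp
qed

text \<open>Reflection in the hyperplane orthogonal to \<open>w\<close>; for \<open>w = 0\<close> the junk value
  \<open>2 / 0 = 0\<close> makes it the identity.\<close>

definition householder :: "nat \<Rightarrow> real vec \<Rightarrow> real mat" where
  "householder n w = mat n n (\<lambda>(i, j). of_bool (i = j) - 2 / (w \<bullet> w) * w $ i * w $ j)"

lemma householder_carrier: "householder n w \<in> carrier_mat n n"
  by (simp add: householder_def)

lemma householder_symmetric: "transpose_mat (householder n w) = householder n w"
  by (rule eq_matI) (auto simp: householder_def)

lemma householder_orthonormal:
  assumes w: "w \<in> carrier_vec n"
  shows "orthonormal_mat n (householder n w)"
proof -
  define t where "t = 2 / (w \<bullet> w)"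
  have tt: "t * t * (\<Sum>k<n. w $ k * w $ k) = 2 * t"
    using w by (simp add: t_def scalar_prod_def lessThan_atLeast0)
  have "householder n w * householder n w = 1\<^sub>m n"
  proof (rule eq_matI)
    fix i j assume "i < dim_row (1\<^sub>m n)" "j < dim_col (1\<^sub>m n)"
    hence i: "i < n" and j: "j < n" by auto
    define a where "a k = t * w $ i * w $ k" for k
    define b where "b k = t * w $ k * w $ j" for k
    have "(householder n w * householder n w) $$ (i, j)
      = (\<Sum>k<n. (of_bool (i = k) - a k) * (of_bool (k = j) - b k))"
      using i j by (simp add: householder_def a_def b_def t_def scalar_prod_def lessThan_atLeast0)
    also have "\<dots> = (\<Sum>k<n. of_bool (i = k) * (of_bool (k = j) - b k))
        - (\<Sum>k<n. of_bool (j = k) * a k) + (\<Sum>k<n. a k * b k)"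
      by (simp add: left_diff_distrib right_diff_distrib sum_subtractf flip: sum.distrib)
    also have "\<dots> = of_bool (i = j) - b i - a j + (\<Sum>k<n. a k * b k)"
      using i j by (simp only: sum_of_bool_eq_mult)
    also have "(\<Sum>k<n. a k * b k) = t * t * (\<Sum>k<n. w $ k * w $ k) * w $ i * w $ j"
      by (simp add: a_def b_def sum_distrib_left sum_distrib_right mult_ac)
    also have "\<dots> = 2 * t * w $ i * w $ j" using tt by simp
    also have "of_bool (i = j) - b i - a j + \<dots> = 1\<^sub>m n $$ (i, j)"
      using i j by (simp add: a_def b_def)
    finally show "(householder n w * householder n w) $$ (i, j) = 1\<^sub>m n $$ (i, j)" .
  qed (simp_all add: householder_def)
  thus ?thesis by (simp add: orthonormal_mat_def householder_symmetric householder_carrier)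
qed

lemma householder_reflects_unit_vec:
  assumes v: "v \<in> carrier_vec n" "v \<bullet> v = 1" and n: "0 < n"
  shows "householder n (v - unit_vec n 0) *\<^sub>v unit_vec n 0 = v"
proof (rule eq_vecI)
  define w where "w = v - unit_vec n 0"
  have w: "w \<in> carrier_vec n" using v by (simp add: w_def)
  have ww: "w \<bullet> w = 2 - 2 * v $ 0"
    using v n by (simp add: w_def minus_scalar_prod_distrib scalar_prod_minus_distrib)
  fix i assume "i < dim_vec v"
  hence i: "i < n" using v by simp
  have "(householder n w *\<^sub>v unit_vec n 0) $ i = of_bool (i = 0) - 2 / (w \<bullet> w) * w $ i * w $ 0"
    using i n by (simp add: householder_def)
  also have "\<dots> = v $ i"
  proof (cases "w \<bullet> w = 0")
    case True
    hence "w = 0\<^sub>v n" using real_sprod_self_pos_iff[OF w] by simp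
    hence "w $ i = 0" using i by simp
    hence "v $ i = of_bool (i = 0)" using i v by (simp add: w_def)
    thus ?thesis using True by simp
  next
    case False
    have "w $ 0 = v $ 0 - 1" using n v by (simp add: w_def)
    hence "2 / (w \<bullet> w) * w $ 0 = -1" using False unfolding ww by (simp add: field_simps)
    hence "2 / (w \<bullet> w) * w $ i * w $ 0 = - w $ i" by (metis mult.commute mult.left_commute mult_minus1_right)
    thus ?thesis using i v by (simp add: w_def)
  qed
  finally show "(householder n (v - unit_vec n 0) *\<^sub>v unit_vec n 0) $ i = v $ i"
    unfolding w_def .
qed (use v in \<open>simp add: householder_def\<close>)

lemma mult_four_block_diag_mat:
  assumes "A \<in> carrier_mat n1 n1" "B \<in> carrier_mat n2 n2" "C \<in> carrier_mat n1 n1" "D \<in> carrier_mat n2 n2"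
  shows "four_block_mat A (0\<^sub>m n1 n2) (0\<^sub>m n2 n1) B * four_block_mat C (0\<^sub>m n1 n2) (0\<^sub>m n2 n1) D
    = four_block_mat (A * C) (0\<^sub>m n1 n2) (0\<^sub>m n2 n1) (B * D)"
  using mult_four_block_mat[OF assms(1) zero_carrier_mat zero_carrier_mat assms(2)
      assms(3) zero_carrier_mat zero_carrier_mat assms(4)] assms by simp

lemma transpose_four_block_diag_mat:
  assumes "A \<in> carrier_mat n1 n1" "B \<in> carrier_mat n2 n2"
  shows "transpose_mat (four_block_mat A (0\<^sub>m n1 n2) (0\<^sub>m n2 n1) B)
    = four_block_mat (transpose_mat A) (0\<^sub>m n1 n2) (0\<^sub>m n2 n1) (transpose_mat B)"
  using transpose_four_block_mat[OF assms(1) zero_carrier_mat zero_carrier_mat assms(2)] by simp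

section \<open>The spectral theorem for real symmetric matrices\<close>

definition spectral_decomp :: "nat \<Rightarrow> real mat \<Rightarrow> (nat \<Rightarrow> real) \<Rightarrow> real mat \<Rightarrow> bool" where
  "spectral_decomp n U d A \<longleftrightarrow> orthonormal_mat n U \<and> A = U * mat_diag n d * transpose_mat U"

lemma spectral_decomp_carrier: "spectral_decomp n U d A \<Longrightarrow> A \<in> carrier_mat n n"
  using orthonormal_matD(1)[of n U] by (auto simp: spectral_decomp_def)

lemma orthonormal_mat_cancel:
  assumes "orthonormal_mat n U" "X \<in> carrier_mat n k"
  shows "transpose_mat U * (U * X) = X" "U * (transpose_mat U * X) = X"
  using assoc_mult_mat[of "transpose_mat U" n n U n X k] assoc_mult_mat[of U n n "transpose_mat U" n X k]
    orthonormal_matD[OF assms(1)] assms(2) by simp_all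

lemma symmetric_eigenvalue_deflation:
  fixes A :: "real mat"
  assumes A: "A \<in> carrier_mat (Suc m) (Suc m)" and sym: "transpose_mat A = A"
    and ev: "eigenvalue A e"
  obtains H A' where "orthonormal_mat (Suc m) H" "A' \<in> carrier_mat m m" "transpose_mat A' = A'"
    "transpose_mat H * A * H = four_block_mat (mat 1 1 (\<lambda>_. e)) (0\<^sub>m 1 m) (0\<^sub>m m 1) A'"
proof -
  let ?n = "Suc m" and ?e0 = "unit_vec (Suc m) 0"
  define u where "u = find_eigenvector A e"
  have u: "u \<in> carrier_vec ?n" "u \<noteq> 0\<^sub>v ?n" "A *\<^sub>v u = e \<cdot>\<^sub>v u"
    using find_eigenvector[OF A ev] A unfolding u_def eigenvector_def by auto
  define v where "v = (1 / sqrt (u \<bullet> u)) \<cdot>\<^sub>v u"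
  have uu: "0 < u \<bullet> u" using real_sprod_self_pos_iff[OF u(1)] u(2) by simp
  have v: "v \<in> carrier_vec ?n" "v \<bullet> v = 1" "A *\<^sub>v v = e \<cdot>\<^sub>v v"
    using u uu A unfolding v_def by (auto simp: mult_mat_vec smult_smult_assoc mult.commute)
  define H where "H = householder ?n (v - ?e0)"
  have H: "orthonormal_mat ?n H" "transpose_mat H = H" "H *\<^sub>v ?e0 = v"
    using householder_orthonormal[of "v - ?e0" ?n] householder_symmetric householder_reflects_unit_vec[OF v(1,2)]
      v(1) unfolding H_def by auto
  note Hc = orthonormal_matD[OF H(1)]
  define B where "B = transpose_mat H * A * H"
  have B: "B \<in> carrier_mat ?n ?n" using Hc A by (simp add: B_def)
  have symB: "transpose_mat B = B"
    using Hc A sym by (simp add: B_def H(2) transpose_mult[of _ ?n ?n _ ?n] assoc_mult_mat[of _ ?n ?n _ ?n _ ?n])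
  have "B *\<^sub>v ?e0 = transpose_mat H *\<^sub>v (A *\<^sub>v (H *\<^sub>v ?e0))"
    using Hc A by (simp add: B_def assoc_mult_mat_vec[of _ ?n ?n _ ?n])
  also have "\<dots> = e \<cdot>\<^sub>v (transpose_mat H *\<^sub>v (H *\<^sub>v ?e0))"
    using Hc v by (simp add: H(3) mult_mat_vec)
  also have "transpose_mat H *\<^sub>v (H *\<^sub>v ?e0) = ?e0"
    using Hc assoc_mult_mat_vec[of "transpose_mat H" ?n ?n H ?n ?e0] by simp
  finally have Be0: "B *\<^sub>v ?e0 = e \<cdot>\<^sub>v ?e0" .
  have col0: "B $$ (i, 0) = (if i = 0 then e else 0)" if "i < ?n" for i
    using arg_cong[OF Be0, of "\<lambda>x. x $ i"] B that by simp
  have row0: "B $$ (0, j) = (if j = 0 then e else 0)" if "j < ?n" for j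
    using col0[OF that] arg_cong[OF symB, of "\<lambda>M. M $$ (j, 0)"] B that by simp
  define A' where "A' = mat m m (\<lambda>(i, j). B $$ (Suc i, Suc j))"
  have "B $$ (Suc j, Suc i) = B $$ (Suc i, Suc j)" if "i < m" "j < m" for i j
    using arg_cong[OF symB, of "\<lambda>M. M $$ (Suc i, Suc j)"] B that by simp
  hence symA': "transpose_mat A' = A'" by (intro eq_matI) (auto simp: A'_def)
  have blk: "B = four_block_mat (mat 1 1 (\<lambda>_. e)) (0\<^sub>m 1 m) (0\<^sub>m m 1) A'"
    by (rule eq_matI) (use B col0 row0 in \<open>auto simp: A'_def less_Suc_eq_0_disj\<close>)
  show ?thesis by (rule that[OF H(1) _ symA' blk[unfolded B_def]]) (simp add: A'_def)
qed

lemma spectral_decomp_orthonormal_conj: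
  assumes H: "orthonormal_mat n H" and A: "A \<in> carrier_mat n n"
    and B: "spectral_decomp n W d B" and HAH: "transpose_mat H * A * H = B"
  shows "spectral_decomp n (H * W) d A"
proof -
  note Hc = orthonormal_matD[OF H]
  have W: "orthonormal_mat n W" and W_eq: "B = W * mat_diag n d * transpose_mat W"
    using B by (simp_all add: spectral_decomp_def)
  note Wc = orthonormal_matD[OF W]
  note simps = assoc_mult_mat[of _ n n _ n _ n] mult_carrier_mat[of _ n n _ n]
  have "A = H * (transpose_mat H * A * H) * transpose_mat H"
    using Hc A by (simp add: simps orthonormal_mat_cancel[OF H])
  also have "\<dots> = (H * W) * mat_diag n d * transpose_mat (H * W)"
    using Hc Wc by (simp add: HAH W_eq simps transpose_mult[of H n n W n])
  finally show ?thesis using orthonormal_mat_mult[OF H W] by (simp add: spectral_decomp_def)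
qed

lemma spectral_decomp_four_block:
  assumes "spectral_decomp m U d A"
  shows "spectral_decomp (Suc m) (four_block_mat (1\<^sub>m 1) (0\<^sub>m 1 m) (0\<^sub>m m 1) U) (case_nat e d)
    (four_block_mat (mat 1 1 (\<lambda>_. e)) (0\<^sub>m 1 m) (0\<^sub>m m 1) A)"
proof -
  let ?E = "mat 1 1 (\<lambda>_. e)"
  define W where "W = four_block_mat (1\<^sub>m 1) (0\<^sub>m 1 m) (0\<^sub>m m 1) U"
  have U: "orthonormal_mat m U" and A: "A = U * mat_diag m d * transpose_mat U"
    using assms by (simp_all add: spectral_decomp_def)
  note Uc = orthonormal_matD[OF U]
  have Wt: "transpose_mat W = four_block_mat (1\<^sub>m 1) (0\<^sub>m 1 m) (0\<^sub>m m 1) (transpose_mat U)"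
    unfolding W_def using transpose_four_block_diag_mat[OF one_carrier_mat Uc(1)] by simp
  have "transpose_mat W * W = 1\<^sub>m (Suc m)"
    unfolding Wt unfolding W_def
    using mult_four_block_diag_mat[OF one_carrier_mat transpose_carrier_mat[THEN iffD2, OF Uc(1)]
        one_carrier_mat Uc(1)] Uc by simp
  hence W: "orthonormal_mat (Suc m) W"
    using four_block_carrier_mat[OF one_carrier_mat[of 1] Uc(1)] by (simp add: orthonormal_mat_def W_def)
  have D: "mat_diag (Suc m) (case_nat e d) = four_block_mat ?E (0\<^sub>m 1 m) (0\<^sub>m m 1) (mat_diag m d)"
    by (rule eq_matI) (auto simp: mat_diag_def split: nat.split)
  have "W * mat_diag (Suc m) (case_nat e d) * transpose_mat W = four_block_mat ?E (0\<^sub>m 1 m) (0\<^sub>m m 1) A"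
    unfolding D Wt A using Uc by (simp add: W_def mult_four_block_diag_mat)
  with W show ?thesis by (simp add: spectral_decomp_def W_def)
qed

lemma char_poly_mat_1: "char_poly (mat 1 1 (\<lambda>_. e)) = [:- e, 1:]"
  by (simp add: char_poly_defs det_def sign_def)

theorem symmetric_spectral_decomposition:
  fixes A :: "real mat"
  assumes "A \<in> carrier_mat n n" "transpose_mat A = A" "char_poly A = (\<Prod>e\<leftarrow>es. [:- e, 1:])"
  shows "\<exists>U. spectral_decomp n U ((!) es) A"
  using assms
proof (induction es arbitrary: n A)
  case Nil
  hence "n = 0" using degree_monic_char_poly[OF Nil(1)] by simp
  hence "spectral_decomp n (1\<^sub>m n) ((!) []) A"
    using Nil(1) by (auto simp: spectral_decomp_def orthonormal_mat_def)
  thus ?case by blast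
next
  case (Cons e es n A)
  let ?E = "mat 1 1 (\<lambda>_. e)"
  define m where "m = length es"
  have n: "n = Suc m"
    using degree_monic_char_poly[OF Cons.prems(1)] Cons.prems(3)
      degree_linear_factors[of uminus "e # es"] by (simp add: m_def)
  have ev: "eigenvalue A e"
    using eigenvalue_root_char_poly[OF Cons.prems(1)] Cons.prems(3) by simp
  obtain H A' where H: "orthonormal_mat n H" and A': "A' \<in> carrier_mat m m" "transpose_mat A' = A'"
    and blk: "transpose_mat H * A * H = four_block_mat ?E (0\<^sub>m 1 m) (0\<^sub>m m 1) A'"
    using symmetric_eigenvalue_deflation[OF Cons.prems(1,2)[unfolded n] ev] unfolding n by metis
  have "similar_mat (transpose_mat H * A * H) A"
    unfolding similar_mat_def similar_mat_wit_def Let_def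
    using orthonormal_matD[OF H] Cons.prems(1) by (intro exI[of _ "transpose_mat H"] exI[of _ H]) auto
  from char_poly_similar[OF this[unfolded blk]]
  have "char_poly A = [:- e, 1:] * char_poly A'"
    using char_poly_four_block_zeros_col[of ?E "0\<^sub>m 1 m" m A'] A'(1)
    unfolding char_poly_mat_1 by simp
  hence "char_poly A' = (\<Prod>e\<leftarrow>es. [:- e, 1:])"
    using Cons.prems(3) mult_left_cancel[of "[:- e, 1:]"] by (simp del: mult_pCons_left)
  with Cons.IH[OF A'] obtain U' where "spectral_decomp m U' ((!) es) A'" by blast
  moreover have "case_nat e ((!) es) = (!) (e # es)" by (rule ext) (simp split: nat.split)
  ultimately have "spectral_decomp n (four_block_mat (1\<^sub>m 1) (0\<^sub>m 1 m) (0\<^sub>m m 1) U') ((!) (e # es))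
      (transpose_mat H * A * H)"
    using spectral_decomp_four_block[of m U' "(!) es" A' e] unfolding blk n by simp
  from spectral_decomp_orthonormal_conj[OF H Cons.prems(1) this refl] show ?case by blast
qed

section \<open>Functions of a spectral decomposition\<close>

lemma spectral_decomp_mult_right:
  assumes "spectral_decomp n U d A"
  shows "A * U = U * mat_diag n d"
proof -
  note U = orthonormal_matD[OF assms[unfolded spectral_decomp_def, THEN conjunct1]]
  have "A * U = (U * mat_diag n d) * (transpose_mat U * U)"
    using assms U assoc_mult_mat[of "U * mat_diag n d" n n "transpose_mat U" n U n]
    by (simp add: spectral_decomp_def)
  thus ?thesis using U right_mult_one_mat[OF mult_carrier_mat[OF U(1) mat_diag_dim]] by simp
qed

lemma spectral_decomp_conj:
  assumes "spectral_decomp n U d A"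
  shows "transpose_mat U * A * U = mat_diag n d"
proof -
  have U: "orthonormal_mat n U" "U \<in> carrier_mat n n" "A \<in> carrier_mat n n"
    using assms spectral_decomp_carrier orthonormal_matD(1) by (auto simp: spectral_decomp_def)
  have "transpose_mat U * A * U = transpose_mat U * (A * U)" using U by simp
  thus ?thesis
    by (simp add: spectral_decomp_mult_right[OF assms] orthonormal_mat_cancel[OF U(1) mat_diag_dim])
qed

lemma mtrace_mult_comm:
  assumes "A \<in> carrier_mat n m" "B \<in> carrier_mat m n"
  shows "mtrace (A * B) = mtrace (B * A)"
  using assms unfolding mtrace_def
  by (simp add: scalar_prod_def lessThan_atLeast0 mult.commute) (rule sum.swap)

lemma mtrace_mat_diag: "mtrace (mat_diag n d) = (\<Sum>k<n. d k)"
  by (simp add: mtrace_def mat_diag_def)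

lemma det_mat_diag: "det (mat_diag n d) = (\<Prod>k<n. d k)"
proof -
  have "diag_mat (mat_diag n d) = map d [0..<n]"
    unfolding diag_mat_def by (rule map_cong) (auto simp: mat_diag_def)
  hence "det (mat_diag n d) = prod_list (map d [0..<n])"
    by (subst det_upper_triangular[of _ n]) (auto simp: mat_diag_def)
  also have "\<dots> = (\<Prod>k<n. d k)" by (induction n) auto
  finally show ?thesis .
qed

lemma spectral_decomp_mtrace:
  assumes "spectral_decomp n U d A"
  shows "mtrace A = (\<Sum>k<n. d k)"
proof -
  have U: "U \<in> carrier_mat n n" "transpose_mat U * U = 1\<^sub>m n"
    using assms orthonormal_matD by (auto simp: spectral_decomp_def)
  have "mtrace A = mtrace ((U * mat_diag n d) * transpose_mat U)"
    using assms by (simp add: spectral_decomp_def)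
  also have "\<dots> = mtrace (transpose_mat U * (U * mat_diag n d))"
    using U by (intro mtrace_mult_comm[of _ n n]) auto
  also have "\<dots> = mtrace (mat_diag n d)"
    using assms by (simp add: spectral_decomp_def orthonormal_mat_cancel[OF _ mat_diag_dim])
  finally show ?thesis by (simp add: mtrace_mat_diag)
qed

lemma spectral_decomp_det:
  assumes "spectral_decomp n U d A"
  shows "det A = (\<Prod>k<n. d k)"
proof -
  have U: "U \<in> carrier_mat n n" "transpose_mat U * U = 1\<^sub>m n"
    using assms orthonormal_matD by (auto simp: spectral_decomp_def)
  have "det U * det U = 1"
    using det_mult[of "transpose_mat U" n U] det_transpose[of U n] U by simp
  moreover have "det A = det U * det (mat_diag n d) * det U"
    using assms U det_mult[OF mult_carrier_mat[OF U(1) mat_diag_dim] transpose_carrier_mat[THEN iffD2, OF U(1)]]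
      det_mult[OF U(1) mat_diag_dim] det_transpose[of U n]
    by (simp add: spectral_decomp_def)
  ultimately show ?thesis by (simp add: det_mat_diag)
qed

lemma spectral_decomp_mult:
  assumes A: "spectral_decomp n U a A" and B: "spectral_decomp n U b B"
  shows "spectral_decomp n U (\<lambda>k. a k * b k) (A * B)"
proof -
  have U: "orthonormal_mat n U" "U \<in> carrier_mat n n" "A \<in> carrier_mat n n"
    using A spectral_decomp_carrier orthonormal_matD(1) by (auto simp: spectral_decomp_def)
  have "A * B = (A * U) * (mat_diag n b * transpose_mat U)"
    using B U by (simp add: spectral_decomp_def assoc_mult_mat[of _ n n _ n _ n] mult_carrier_mat[of _ n n _ n])
  also have "\<dots> = U * (mat_diag n a * mat_diag n b) * transpose_mat U"
    using U by (simp add: spectral_decomp_mult_right[OF A] assoc_mult_mat[of _ n n _ n _ n]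
        mult_carrier_mat[of _ n n _ n] del: mat_diag_diag)
  finally show ?thesis using U(1) by (simp add: spectral_decomp_def)
qed

lemma spectral_decomp_symmetric:
  assumes "spectral_decomp n U d A"
  shows "transpose_mat A = A"
proof -
  have U: "U \<in> carrier_mat n n" using assms orthonormal_matD(1) by (auto simp: spectral_decomp_def)
  have "transpose_mat (mat_diag n d) = mat_diag n d" by (rule eq_matI) (auto simp: mat_diag_def)
  thus ?thesis
    using assms U by (simp add: spectral_decomp_def transpose_mult[of _ n n _ n] assoc_mult_mat[of _ n n _ n _ n]
        mult_carrier_mat[of _ n n _ n])
qed

lemma spectral_decomp_one: "orthonormal_mat n U \<Longrightarrow> spectral_decomp n U (\<lambda>_. 1) (1\<^sub>m n)"
  using orthonormal_matD[of n U] by (simp add: spectral_decomp_def)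

lemma mat_diag_cong: "(\<And>k. k < n \<Longrightarrow> d k = d' k) \<Longrightarrow> mat_diag n d = mat_diag n d'"
  by (rule eq_matI) (auto simp: mat_diag_def)

lemma spectral_decomp_cong:
  "spectral_decomp n U d A \<Longrightarrow> (\<And>k. k < n \<Longrightarrow> d k = d' k) \<Longrightarrow> spectral_decomp n U d' A"
  by (simp add: spectral_decomp_def mat_diag_cong[of n d d'])

lemma minv_eqI:
  assumes A: "A \<in> carrier_mat n n" and B: "B \<in> carrier_mat n n" and AB: "A * B = 1\<^sub>m n"
  shows "minv A = B"
proof (cases "mat_inverse A")
  case None
  have "B * A = 1\<^sub>m n" using mat_mult_left_right_inverse[OF A B AB] .
  hence "A \<in> Units (ring_mat TYPE(real) n ())"
    unfolding Units_def ring_mat_def using A B AB by auto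
  with mat_inverse(1)[OF A None, of "()"] show ?thesis by simp
next
  case (Some B')
  from mat_inverse(2)[OF A Some] have AB': "A * B' = 1\<^sub>m n" "B' * A = 1\<^sub>m n" "B' \<in> carrier_mat n n" by auto
  have "B = (B' * A) * B" using AB' B by simp
  also have "\<dots> = B' * (A * B)" using AB'(3) A B by (rule assoc_mult_mat)
  also have "\<dots> = B'" using AB AB'(3) by simp
  finally show ?thesis by (simp add: minv_def Some)
qed

lemma spectral_decomp_minv:
  assumes A: "spectral_decomp n U d A" and d: "\<And>k. k < n \<Longrightarrow> d k \<noteq> 0"
  shows "spectral_decomp n U (\<lambda>k. 1 / d k) (minv A)"
proof -
  define B where "B = U * mat_diag n (\<lambda>k. 1 / d k) * transpose_mat U"
  have U: "orthonormal_mat n U" using A by (simp add: spectral_decomp_def)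
  have B: "spectral_decomp n U (\<lambda>k. 1 / d k) B" using U by (simp add: spectral_decomp_def B_def)
  have "spectral_decomp n U (\<lambda>_. 1) (A * B)"
    by (rule spectral_decomp_cong[OF spectral_decomp_mult[OF A B]]) (simp add: d)
  hence "A * B = 1\<^sub>m n"
    using spectral_decomp_one[OF U] by (simp add: spectral_decomp_def)
  hence "minv A = B"
    using minv_eqI spectral_decomp_carrier[OF A] spectral_decomp_carrier[OF B] by blast
  thus ?thesis using B by simp
qed

lemma frob_norm_mtrace:
  assumes "A \<in> carrier_mat n m"
  shows "frob_norm A = sqrt (mtrace (A * transpose_mat A))"
  using assms by (simp add: frob_norm_def mtrace_def scalar_prod_def lessThan_atLeast0 power2_eq_square)

lemma frob_norm_L2_set:
  "A \<in> carrier_mat n m \<Longrightarrow> frob_norm A = L2_set (\<lambda>x. A $$ x) ({..<n} \<times> {..<m})"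
  unfolding frob_norm_def L2_set_def by (simp add: sum.cartesian_product)

lemma frob_norm_minus_le:
  assumes A: "A \<in> carrier_mat n m" and B: "B \<in> carrier_mat n m"
  shows "frob_norm (A - B) \<le> frob_norm A + frob_norm B"
proof -
  have "frob_norm (A - B) = L2_set (\<lambda>x. A $$ x + (- B $$ x)) ({..<n} \<times> {..<m})"
    unfolding frob_norm_L2_set[OF minus_carrier_mat[OF B]] using A B by (intro L2_set_cong) auto
  also have "\<dots> \<le> L2_set (\<lambda>x. A $$ x) ({..<n} \<times> {..<m}) + L2_set (\<lambda>x. - B $$ x) ({..<n} \<times> {..<m})"
    by (rule L2_set_triangle_ineq)
  finally show ?thesis unfolding frob_norm_L2_set[OF A] frob_norm_L2_set[OF B] by (simp add: L2_set_def)
qed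

lemma spectral_decomp_frob_norm:
  assumes "spectral_decomp n U d A"
  shows "frob_norm A = sqrt (\<Sum>k<n. (d k)\<^sup>2)"
  using frob_norm_mtrace[OF spectral_decomp_carrier[OF assms]]
    spectral_decomp_mtrace[OF spectral_decomp_mult[OF assms assms]]
  by (simp add: spectral_decomp_symmetric[OF assms] power2_eq_square)

lemma spd_spectral_decomp_pos:
  assumes A: "spd n A" and dec: "spectral_decomp n U d A" and k: "k < n"
  shows "0 < d k"
proof -
  have U: "orthonormal_mat n U" "U \<in> carrier_mat n n" "A \<in> carrier_mat n n"
    using dec spectral_decomp_carrier orthonormal_matD(1) by (auto simp: spectral_decomp_def)
  define v where "v = col U k"
  have v: "v \<in> carrier_vec n" using U k by (simp add: v_def)
  have "v \<bullet> v = (transpose_mat U * U) $$ (k, k)" using U k by (simp add: v_def)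
  hence "v \<bullet> v = 1" using orthonormal_matD(2)[OF U(1)] k by simp
  hence "v \<noteq> 0\<^sub>v n" using v by auto
  hence "0 < v \<bullet> (A *\<^sub>v v)" using A v by (simp add: spd_def)
  also have "v \<bullet> (A *\<^sub>v v) = (transpose_mat U * (A * U)) $$ (k, k)"
    using U k by (simp add: v_def mult_mat_vec_def)
  also have "\<dots> = d k"
    using spectral_decomp_conj[OF dec] U k by (simp add: mat_diag_def)
  finally show ?thesis .
qed

lemma mtrace_mat_diag_conj:
  assumes "W \<in> carrier_mat n n"
  shows "mtrace (mat_diag n a * W * mat_diag n b * transpose_mat W)
    = (\<Sum>k<n. \<Sum>l<n. a k * b l * (W $$ (k, l))\<^sup>2)"
proof -
  have "mat_diag n a * W * mat_diag n b = mat n n (\<lambda>(i, j). a i * W $$ (i, j) * b j)"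
    using assms by (auto simp: mat_diag_mult_left mat_diag_mult_right[of _ n n] intro!: cong_mat)
  thus ?thesis
    using assms by (simp add: mtrace_def scalar_prod_def lessThan_atLeast0 power2_eq_square mult_ac)
qed

lemma spectral_decomp_mtrace_mult:
  assumes S: "spectral_decomp n U a S" and T: "spectral_decomp n V b T"
  shows "mtrace (S * T) = (\<Sum>k<n. \<Sum>l<n. a k * b l * ((transpose_mat U * V) $$ (k, l))\<^sup>2)"
proof -
  have U: "U \<in> carrier_mat n n" and V: "V \<in> carrier_mat n n"
    using S T orthonormal_matD(1) by (auto simp: spectral_decomp_def)
  note simps = assoc_mult_mat[of _ n n _ n _ n] mult_carrier_mat[of _ n n _ n]
  let ?W = "transpose_mat U * V"
  have "mtrace (S * T) = mtrace (U * (mat_diag n a * transpose_mat U * T))"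
    using S T U V by (simp add: spectral_decomp_def simps)
  also have "\<dots> = mtrace ((mat_diag n a * transpose_mat U * T) * U)"
    using U spectral_decomp_carrier[OF T] by (intro mtrace_mult_comm[of _ n n]) (auto simp: simps)
  also have "(mat_diag n a * transpose_mat U * T) * U
      = mat_diag n a * ?W * mat_diag n b * transpose_mat ?W"
    using T U V by (simp add: spectral_decomp_def simps transpose_mult[of _ n n _ n])
  finally show ?thesis using U V by (simp add: mtrace_mat_diag_conj)
qed

section \<open>A rearrangement inequality for doubly stochastic weights\<close>

lemma sum_weighted_ge_sum_smallest:
  fixes om q :: "nat \<Rightarrow> real"
  assumes dec: "\<And>i j. i \<le> j \<Longrightarrow> j < n \<Longrightarrow> om j \<le> om i"
    and q0: "\<And>k. k < n \<Longrightarrow> 0 \<le> q k" and q1: "\<And>k. k < n \<Longrightarrow> q k \<le> 1"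
    and qs: "(\<Sum>k<n. q k) = real t" and t: "1 \<le> t" "t \<le> n"
  shows "(\<Sum>k\<in>{n - t..<n}. om k) \<le> (\<Sum>k<n. om k * q k)"
proof -
  define s where "s = n - t"
  define th where "th = om s"
  have s: "s < n" using t by (simp add: s_def)
  have split: "{..<n} = {..<s} \<union> {s..<n}" using s by auto
  have "(\<Sum>k<n. om k * q k) = (\<Sum>k<s. om k * q k) + (\<Sum>k\<in>{s..<n}. om k * q k)"
    by (subst split, rule sum.union_disjoint) auto
  moreover have "real t = (\<Sum>k<s. q k) + (\<Sum>k\<in>{s..<n}. q k)"
    unfolding qs[symmetric] by (subst split, rule sum.union_disjoint) auto
  moreover have "th * (\<Sum>k<s. q k) \<le> (\<Sum>k<s. om k * q k)"
    unfolding sum_distrib_left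
    by (rule sum_mono) (use s dec q0 in \<open>auto simp: th_def intro!: mult_right_mono\<close>)
  moreover have "(\<Sum>k\<in>{s..<n}. om k * (1 - q k)) \<le> (\<Sum>k\<in>{s..<n}. th * (1 - q k))"
    by (rule sum_mono) (use s dec q1 in \<open>auto simp: th_def intro!: mult_right_mono\<close>)
  moreover have "(\<Sum>k\<in>{s..<n}. th * (1 - q k)) = th * real t - th * (\<Sum>k\<in>{s..<n}. q k)"
    using t by (simp add: s_def sum_subtractf sum_distrib_left[symmetric] algebra_simps)
  ultimately show ?thesis
    by (simp add: s_def[symmetric] algebra_simps sum_subtractf)
qed

lemma summation_by_parts_lessThan:
  fixes la c :: "nat \<Rightarrow> real"
  shows "(\<Sum>l<n. la l * c l) = (\<Sum>m<n. (la m - la (Suc m)) * (\<Sum>l\<le>m. c l)) + la n * (\<Sum>l<n. c l)"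
proof (induction n)
  case (Suc n)
  have "(\<Sum>l\<le>n. c l) = (\<Sum>l<n. c l) + c n" by (simp add: lessThan_Suc_atMost[symmetric])
  with Suc show ?case by (simp add: algebra_simps)
qed simp

definition doubly_stochastic :: "nat \<Rightarrow> (nat \<Rightarrow> nat \<Rightarrow> real) \<Rightarrow> bool" where
  "doubly_stochastic n P \<longleftrightarrow> (\<forall>k<n. \<forall>l<n. 0 \<le> P k l)
     \<and> (\<forall>k<n. (\<Sum>l<n. P k l) = 1) \<and> (\<forall>l<n. (\<Sum>k<n. P k l) = 1)"

lemma orthonormal_mat_doubly_stochastic:
  "orthonormal_mat n W \<Longrightarrow> doubly_stochastic n (\<lambda>k l. (W $$ (k, l))\<^sup>2)"
  using orthonormal_mat_row_sum_sq orthonormal_mat_col_sum_sq by (simp add: doubly_stochastic_def)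

lemma doubly_stochastic_partial_sum_ge:
  fixes om :: "nat \<Rightarrow> real"
  assumes dec: "\<And>i j. i \<le> j \<Longrightarrow> j < n \<Longrightarrow> om j \<le> om i"
    and P: "doubly_stochastic n P" and m: "m < n"
  shows "(\<Sum>l\<le>m. om (n - 1 - l)) \<le> (\<Sum>l\<le>m. \<Sum>k<n. om k * P k l)"
proof -
  define q where "q k = (\<Sum>l\<le>m. P k l)" for k
  have "(\<Sum>l\<le>m. om (n - 1 - l)) = (\<Sum>k\<in>{n - Suc m..<n}. om k)"
    by (rule sum.reindex_bij_witness[of _ "\<lambda>k. n - 1 - k" "\<lambda>l. n - 1 - l"]) (use m in auto)
  also have "\<dots> \<le> (\<Sum>k<n. om k * q k)"
  proof (rule sum_weighted_ge_sum_smallest[OF dec])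
    show "0 \<le> q k" if "k < n" for k
      unfolding q_def using P that m by (intro sum_nonneg) (auto simp: doubly_stochastic_def)
    show "q k \<le> 1" if "k < n" for k
    proof -
      have "q k \<le> (\<Sum>l<n. P k l)"
        unfolding q_def by (rule sum_mono2) (use m P that in \<open>auto simp: doubly_stochastic_def\<close>)
      thus ?thesis using P that by (simp add: doubly_stochastic_def)
    qed
    show "(\<Sum>k<n. q k) = real (Suc m)"
      unfolding q_def by (subst sum.swap) (use P m in \<open>simp add: doubly_stochastic_def\<close>)
  qed (use m in auto)
  also have "\<dots> = (\<Sum>l\<le>m. \<Sum>k<n. om k * P k l)"
    unfolding q_def by (subst sum.swap) (simp add: sum_distrib_left)
  finally show ?thesis .
qed

text \<open>Summation by parts in \<open>\<lambda>\<close> reduces the claim to partial sums over the first \<open>m + 1\<close>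
  columns; their total weight \<open>m + 1\<close> is spread with row weights at most 1, so
  \<open>sum_weighted_ge_sum_smallest\<close> applies.\<close>

theorem doubly_stochastic_rearrangement:
  fixes om la :: "nat \<Rightarrow> real"
  assumes om_dec: "\<And>i j. i \<le> j \<Longrightarrow> j < n \<Longrightarrow> om j \<le> om i"
    and la_dec: "\<And>i j. i \<le> j \<Longrightarrow> j < n \<Longrightarrow> la j \<le> la i"
    and la_nonneg: "\<And>i. i < n \<Longrightarrow> 0 \<le> la i"
    and P: "doubly_stochastic n P"
  shows "(\<Sum>l<n. la l * om (n - 1 - l)) \<le> (\<Sum>k<n. \<Sum>l<n. om k * la l * P k l)"
proof -
  define la' where "la' l = (if l < n then la l else 0)" for l
  have parts: "(\<Sum>l<n. la l * c l) = (\<Sum>m<n. (la' m - la' (Suc m)) * (\<Sum>l\<le>m. c l))" for c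
    using summation_by_parts_lessThan[of la' c n] by (simp add: la'_def)
  have "(\<Sum>m<n. (la' m - la' (Suc m)) * (\<Sum>l\<le>m. om (n - 1 - l)))
      \<le> (\<Sum>m<n. (la' m - la' (Suc m)) * (\<Sum>l\<le>m. \<Sum>k<n. om k * P k l))"
  proof (rule sum_mono, rule mult_left_mono)
    fix m assume "m \<in> {..<n}"
    hence m: "m < n" by simp
    show "(\<Sum>l\<le>m. om (n - 1 - l)) \<le> (\<Sum>l\<le>m. \<Sum>k<n. om k * P k l)"
      using doubly_stochastic_partial_sum_ge[OF om_dec P m] .
    show "0 \<le> la' m - la' (Suc m)"
      using la_dec[of m "Suc m"] la_nonneg[of m] m by (auto simp: la'_def)
  qed
  also have "\<dots> = (\<Sum>k<n. \<Sum>l<n. om k * la l * P k l)"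
    unfolding parts[symmetric] by (subst sum.swap) (simp add: sum_distrib_left mult_ac)
  finally show ?thesis unfolding parts .
qed

section \<open>The function \<open>x \<mapsto> - ln x + x w\<close>\<close>

lemma ln_add_one_le_minus_ln_add_mult:
  fixes w x :: real
  assumes "0 < w" "0 < x"
  shows "ln w + 1 \<le> - ln x + x * w"
  using ln_le_minus_one[of "x * w"] assms by (simp add: ln_mult)

lemma minus_ln_add_mult_strict_decreasing:
  fixes w x y :: real
  assumes "0 < w" "0 < x" "x < y" "y \<le> 1 / w"
  shows "- ln y + y * w < - ln x + x * w"
proof -
  have "y * w \<le> 1" using assms(1,4) by (simp add: field_simps)
  hence y: "0 < y" "w \<le> 1 / y" using assms(2,3) by (simp_all add: field_simps)
  have "(y - x) * w \<le> (y - x) / y" using mult_left_mono[OF y(2), of "y - x"] assms by simp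
  moreover have "(y - x) / y < ln y - ln x" using ln_diff_less[of x y] assms y by (simp add: field_simps)
  ultimately show ?thesis by (simp add: algebra_simps)
qed

lemma minus_ln_add_mult_strict_increasing:
  fixes w x y :: real
  assumes "0 < w" "1 / w \<le> x" "x < y"
  shows "- ln x + x * w < - ln y + y * w"
proof -
  have "0 < 1 / w" using assms(1) by simp
  hence x0: "0 < x" using assms(2) by linarith
  have "1 \<le> x * w" using assms(1,2) by (simp add: field_simps)
  hence x: "0 < x" "1 / x \<le> w" using x0 by (simp_all add: field_simps)
  have "(y - x) / x \<le> (y - x) * w" using mult_left_mono[OF x(2), of "y - x"] assms by simp
  moreover have "ln y - ln x < (y - x) / x" using ln_diff_less[of y x] assms x by simp
  ultimately show ?thesis by (simp add: algebra_simps)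
qed

lemma minus_ln_add_mult_exceeds_near_zero:
  fixes w r :: real
  assumes w: "0 < w"
  shows "\<exists>x. 0 < x \<and> x < 1 / w \<and> r < - ln x + x * w"
proof -
  define x where "x = min (exp (- r - 1)) (1 / (2 * w))"
  have x: "0 < x" "x < 1 / w" using w by (auto simp: x_def min_def field_simps)
  have "ln x \<le> - r - 1" using x ln_le_cancel_iff[of x "exp (- r - 1)"] by (simp add: x_def)
  moreover have "0 < x * w" using x w by simp
  ultimately show ?thesis using x by (intro exI[of _ x]) linarith
qed

lemma minus_ln_add_mult_exceeds_at_infinity:
  fixes w r :: real
  assumes w: "0 < w"
  shows "\<exists>x. 1 / w < x \<and> r < - ln x + x * w"
proof -
  define x where "x = 2 / w * (\<bar>r\<bar> + \<bar>ln (w / 2)\<bar> + 1)"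
  have x: "1 / w < x" using w by (simp add: x_def field_simps)
  have "0 < 1 / w" using w by simp
  hence "0 < x" using x by linarith
  hence "ln x + ln (w / 2) \<le> x * (w / 2) - 1"
    using ln_le_minus_one[of "x * (w / 2)"] ln_mult[of x "w / 2"] w by simp
  moreover have "x * (w / 2) = \<bar>r\<bar> + \<bar>ln (w / 2)\<bar> + 1" using w by (simp add: x_def)
  ultimately show ?thesis using x by (intro exI[of _ x]) linarith
qed

theorem minus_ln_add_mult_two_roots:
  fixes w r :: real
  assumes w: "0 < w" and r: "ln w + 1 < r"
  obtains a b where "0 < a" "a < b" "{x. 0 < x \<and> - ln x + x * w = r} = {a, b}"
    "\<And>x. 0 < x \<Longrightarrow> x < a \<or> b < x \<Longrightarrow> r < - ln x + x * w"
proof -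
  define g where "g x = - ln x + x * w" for x
  define m where "m = 1 / w"
  have gm: "g m < r" using w r by (simp add: g_def m_def ln_div)
  obtain x0 where x0: "0 < x0" "x0 < m" "r < g x0"
    using minus_ln_add_mult_exceeds_near_zero[OF w, of r] unfolding g_def m_def by blast
  obtain x1 where x1: "m < x1" "r < g x1"
    using minus_ln_add_mult_exceeds_at_infinity[OF w, of r] unfolding g_def m_def by blast
  have cont: "continuous_on {x..y} g" if "0 < x" for x y
    using that unfolding g_def by (intro continuous_intros) auto
  obtain a where a: "x0 \<le> a" "a \<le> m" "g a = r"
    using IVT2'[of g m r x0] cont[OF x0(1)] x0 gm by fastforce
  obtain b where b: "m \<le> b" "b \<le> x1" "g b = r"
    using IVT'[of g m r x1] cont[of m x1] x0 x1 gm by fastforce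
  have dec: "g y < g x" if "0 < x" "x < y" "y \<le> m" for x y
    using minus_ln_add_mult_strict_decreasing[OF w that[unfolded m_def]] by (simp add: g_def)
  have inc: "g x < g y" if "m \<le> x" "x < y" for x y
    using minus_ln_add_mult_strict_increasing[OF w that[unfolded m_def]] by (simp add: g_def)
  have a0: "0 < a" and am: "a < m" and bm: "m < b"
    using a b x0 gm by (auto simp: order.order_iff_strict)
  have outside: "r < g x" if "0 < x" "x < a \<or> b < x" for x
    using that dec[of x a] inc[of b x] a b am bm by auto
  have inside: "g x < r" if "a < x" "x < b" for x
    using that dec[of a x] inc[of x b] a b a0 by (cases "x \<le> m") auto
  have "{x. 0 < x \<and> g x = r} = {a, b}"
  proof (intro equalityI subsetI)
    fix x assume "x \<in> {x. 0 < x \<and> g x = r}"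
    thus "x \<in> {a, b}" using outside[of x] inside[of x] by force
  qed (use a b a0 in auto)
  thus ?thesis using that[of a b] outside a0 am bm unfolding g_def by auto
qed

section \<open>The objective on positive definite matrices\<close>

lemma sorted_eigs_length: "spd p A \<Longrightarrow> sorted_eigs A es \<Longrightarrow> length es = p"
  by (auto simp: spd_def sorted_eigs_def)

lemma sorted_eigs_antimono: "sorted_eigs A es \<Longrightarrow> i \<le> j \<Longrightarrow> j < length es \<Longrightarrow> es ! j \<le> es ! i"
  unfolding sorted_eigs_def by (cases "i = j") (auto simp: sorted_wrt_iff_nth_less)

lemma spd_spectral_decomp:
  assumes "spd p A" "sorted_eigs A es"
  obtains U where "spectral_decomp p U ((!) es) A"
  using symmetric_spectral_decomposition[of A p es] assms
  unfolding spd_def sorted_eigs_def by blast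

lemma spd_sorted_eigs_pos:
  assumes "spd p A" "sorted_eigs A es" "k < p"
  shows "0 < es ! k"
  using spd_spectral_decomp_pos[OF assms(1) _ assms(3)] spd_spectral_decomp[OF assms(1,2)] by metis

lemma fobj_lower_bound:
  assumes S: "spd p S" "sorted_eigs S om" and Th: "spd p Th" "sorted_eigs Th la"
  shows "(\<Sum>l<p. - ln (la ! l) + la ! l * om ! (p - 1 - l)) \<le> fobj S Th"
proof -
  obtain U where U: "spectral_decomp p U ((!) om) S" using spd_spectral_decomp[OF S] .
  obtain V where V: "spectral_decomp p V ((!) la) Th" using spd_spectral_decomp[OF Th] .
  have la_pos: "0 < la ! k" if "k < p" for k using spd_sorted_eigs_pos[OF Th that] .
  have "ln (det Th) = (\<Sum>l<p. ln (la ! l))"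
    unfolding spectral_decomp_det[OF V] by (subst ln_prod) (auto dest: la_pos)
  moreover have "(\<Sum>l<p. la ! l * om ! (p - 1 - l)) \<le> mtrace (S * Th)"
    unfolding spectral_decomp_mtrace_mult[OF U V]
  proof (rule doubly_stochastic_rearrangement)
    show "om ! j \<le> om ! i" if "i \<le> j" "j < p" for i j
      using sorted_eigs_antimono[OF S(2) that(1)] that(2) sorted_eigs_length[OF S] by simp
    show "la ! j \<le> la ! i" if "i \<le> j" "j < p" for i j
      using sorted_eigs_antimono[OF Th(2) that(1)] that(2) sorted_eigs_length[OF Th] by simp
    show "0 \<le> la ! i" if "i < p" for i using la_pos[OF that] by simp
    show "doubly_stochastic p (\<lambda>k l. ((transpose_mat U * V) $$ (k, l))\<^sup>2)"
      using U V by (intro orthonormal_mat_doubly_stochastic orthonormal_mat_mult orthonormal_mat_transpose)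
        (simp_all add: spectral_decomp_def)
  qed
  ultimately show ?thesis
    by (simp add: fobj_def sum_subtractf)
qed

lemma rval_minus_ln_add_one:
  assumes "i < length om"
  shows "rval om i - (ln (om ! (length om - 1 - i)) + 1) = (\<Sum>k<length om. om ! k - (ln (om ! k) + 1))"
proof -
  let ?p = "length om" and ?h = "\<lambda>j. ln (om ! (length om - 1 - j)) + 1"
  have "(\<Sum>j\<in>{0..<?p}. ?h j) = ?h i + (\<Sum>j\<in>{0..<?p} - {i}. ?h j)"
    using assms by (subst sum.remove) auto
  moreover have "(\<Sum>j\<in>{0..<?p}. ?h j) = (\<Sum>k<?p. ln (om ! k) + 1)"
    by (rule sum.reindex_bij_witness[of _ "\<lambda>k. ?p - 1 - k" "\<lambda>k. ?p - 1 - k"]) auto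
  ultimately show ?thesis
    unfolding rval_def by (simp add: sum_list_sum_nth lessThan_atLeast0 sum_subtractf)
qed

lemma rval_gt:
  assumes S: "spd p S" "S \<noteq> 1\<^sub>m p" "sorted_eigs S om" and i: "i < p"
  shows "ln (om ! (p - 1 - i)) + 1 < rval om i"
proof -
  have len: "length om = p" using sorted_eigs_length[OF S(1,3)] .
  obtain U where U: "spectral_decomp p U ((!) om) S" using spd_spectral_decomp[OF S(1,3)] .
  have pos: "0 < om ! k" if "k < p" for k using spd_sorted_eigs_pos[OF S(1,3) that] .
  have "\<exists>k<p. om ! k \<noteq> 1"
  proof (rule ccontr)
    assume "\<not> (\<exists>k<p. om ! k \<noteq> 1)"
    hence "spectral_decomp p U (\<lambda>_. 1) S" by (intro spectral_decomp_cong[OF U]) auto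
    hence "S = 1\<^sub>m p" using spectral_decomp_one[of p U] by (simp add: spectral_decomp_def)
    with S(2) show False ..
  qed
  then obtain k where k: "k < p" "om ! k \<noteq> 1" by blast
  have "0 < (\<Sum>k<p. om ! k - (ln (om ! k) + 1))"
  proof (rule sum_pos2[of _ k])
    show "0 < om ! k - (ln (om ! k) + 1)"
      using ln_le_minus_one[OF pos[OF k(1)]] ln_eq_minus_one[OF pos[OF k(1)]] k(2) by linarith
    show "0 \<le> om ! j - (ln (om ! j) + 1)" if "j \<in> {..<p}" for j
      using ln_le_minus_one[OF pos[of j]] that by simp
  qed (use k in auto)
  thus ?thesis using rval_minus_ln_add_one[of i om] i len by simp
qed

lemma root_set_two_roots:
  assumes w: "0 < om ! (length om - 1 - i)" and r: "ln (om ! (length om - 1 - i)) + 1 < rval om i"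
  obtains a b where "0 < a" "a < b" "root_set om i = {a, b}" "lam_min om i = a" "lam_max om i = b"
    "\<And>x. 0 < x \<Longrightarrow> x < a \<or> b < x \<Longrightarrow> rval om i < - ln x + x * om ! (length om - 1 - i)"
proof -
  let ?w = "om ! (length om - 1 - i)"
  obtain a b where ab: "0 < a" "a < b" "{x. 0 < x \<and> - ln x + x * ?w = rval om i} = {a, b}"
    and out: "\<And>x. 0 < x \<Longrightarrow> x < a \<or> b < x \<Longrightarrow> rval om i < - ln x + x * ?w"
    using minus_ln_add_mult_two_roots[OF w r] by blast
  have roots: "root_set om i = {a, b}" using ab(3) by (simp add: root_set_def)
  have "lam_min om i = a" "lam_max om i = b" using ab(2) by (simp_all add: lam_min_def lam_max_def roots)
  thus ?thesis using that[OF ab(1,2) roots _ _ out] by blast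
qed

lemma spd_root_set_two_roots:
  assumes S: "spd p S" "S \<noteq> 1\<^sub>m p" "sorted_eigs S om" and i: "i < p"
  obtains a b where "0 < a" "a < b" "root_set om i = {a, b}" "lam_min om i = a" "lam_max om i = b"
    "\<And>x. 0 < x \<Longrightarrow> x < a \<or> b < x \<Longrightarrow> rval om i < - ln x + x * om ! (p - 1 - i)"
proof -
  have len: "length om = p" using sorted_eigs_length[OF S(1,3)] .
  have w: "0 < om ! (length om - 1 - i)" using spd_sorted_eigs_pos[OF S(1,3)] i len by simp
  have r: "ln (om ! (length om - 1 - i)) + 1 < rval om i" using rval_gt[OF S i] len by simp
  show ?thesis by (rule root_set_two_roots[OF w r, unfolded len]) (rule that)
qed

lemma lam_min_pos:
  assumes "spd p S" "S \<noteq> 1\<^sub>m p" "sorted_eigs S om" "i < p"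
  shows "0 < lam_min om i"
  by (rule spd_root_set_two_roots[OF assms]) simp

lemma fobj_one: "S \<in> carrier_mat p p \<Longrightarrow> fobj S (1\<^sub>m p) = mtrace S"
  by (simp add: fobj_def)

lemma fobj_gt_mtrace:
  assumes S: "spd p S" "S \<noteq> 1\<^sub>m p" "sorted_eigs S om" and Th: "spd p Th" "sorted_eigs Th la"
    and i: "i < p" and out: "la ! i \<notin> {lam_min om i .. lam_max om i}"
  shows "mtrace S < fobj S Th"
proof -
  let ?w = "\<lambda>l. om ! (p - 1 - l)" and ?g = "\<lambda>l. - ln (la ! l) + la ! l * om ! (p - 1 - l)"
  have len: "length om = p" using sorted_eigs_length[OF S(1,3)] .
  have w: "0 < ?w l" if "l < p" for l using spd_sorted_eigs_pos[OF S(1,3)] that by simp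
  have la: "0 < la ! l" if "l < p" for l using spd_sorted_eigs_pos[OF Th] that .
  obtain a b where "0 < a" "a < b" "root_set om i = {a, b}" and ab: "lam_min om i = a" "lam_max om i = b"
    and root_out: "\<And>x. 0 < x \<Longrightarrow> x < a \<or> b < x \<Longrightarrow> rval om i < - ln x + x * ?w i"
    by (rule spd_root_set_two_roots[OF S i]) blast
  obtain U where U: "spectral_decomp p U ((!) om) S" using spd_spectral_decomp[OF S(1,3)] .
  have "mtrace S = sum_list om"
    using spectral_decomp_mtrace[OF U] len by (simp add: sum_list_sum_nth lessThan_atLeast0)
  hence "mtrace S = rval om i + (\<Sum>l\<in>{0..<p} - {i}. ln (?w l) + 1)"
    by (simp add: rval_def len)
  also have "\<dots> < ?g i + (\<Sum>l\<in>{0..<p} - {i}. ?g l)"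
  proof (rule add_less_le_mono)
    show "rval om i < ?g i" using root_out[OF la[OF i]] out ab by auto
    show "(\<Sum>l\<in>{0..<p} - {i}. ln (?w l) + 1) \<le> (\<Sum>l\<in>{0..<p} - {i}. ?g l)"
      using ln_add_one_le_minus_ln_add_mult[OF w la] by (intro sum_mono) auto
  qed
  also have "\<dots> = (\<Sum>l<p. ?g l)" using i by (simp add: lessThan_atLeast0 sum.remove)
  also have "\<dots> \<le> fobj S Th" using fobj_lower_bound[OF S(1,3) Th] .
  finally show ?thesis .
qed

lemma frob_norm_minv_le:
  assumes Th: "spd p Th" "sorted_eigs Th la" and c: "\<And>k. k < p \<Longrightarrow> 0 < c k \<and> c k \<le> la ! k"
  shows "frob_norm (minv Th) \<le> sqrt (\<Sum>k<p. c k powr (-2))"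
proof -
  obtain V where V: "spectral_decomp p V ((!) la) Th" using spd_spectral_decomp[OF Th] .
  have la: "0 < la ! k" if "k < p" for k using spd_sorted_eigs_pos[OF Th that] .
  have "frob_norm (minv Th) = sqrt (\<Sum>k<p. (1 / la ! k)\<^sup>2)"
    using spectral_decomp_frob_norm[OF spectral_decomp_minv[OF V]] la by (simp add: less_imp_neq[symmetric])
  also have "\<dots> \<le> sqrt (\<Sum>k<p. c k powr (-2))"
  proof (intro real_sqrt_le_mono sum_mono)
    fix k assume "k \<in> {..<p}"
    with c[of k] have "0 < c k" "c k \<le> la ! k" by auto
    hence "(c k)\<^sup>2 \<le> (la ! k)\<^sup>2" "0 < (c k)\<^sup>2" by (simp_all add: power_mono)
    hence "inverse ((la ! k)\<^sup>2) \<le> inverse ((c k)\<^sup>2)" by (rule le_imp_inverse_le)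
    thus "(1 / la ! k)\<^sup>2 \<le> c k powr (-2)"
      using \<open>0 < c k\<close> by (simp add: powr_minus divide_inverse power_inverse)
  qed
  finally show ?thesis .
qed

lemma minimizer_eigenvalues_between_roots:
  assumes S: "spd p S" "S \<noteq> 1\<^sub>m p" "sorted_eigs S om"
    and C: "C \<subseteq> {A. spd p A}" "1\<^sub>m p \<in> C" "Th \<in> C" and Th_min: "\<forall>A\<in>C. fobj S Th \<le> fobj S A"
    and la: "sorted_eigs Th la" and i: "i < p"
  shows "la ! i \<in> {lam_min om i .. lam_max om i}"
proof (rule ccontr)
  assume "la ! i \<notin> {lam_min om i .. lam_max om i}"
  with fobj_gt_mtrace[OF S _ la i] C have "mtrace S < fobj S Th" by auto
  moreover have "fobj S Th \<le> mtrace S"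
    using Th_min C(2) fobj_one[of S p] S(1) by (auto simp: spd_def)
  ultimately show False by simp
qed

lemma minimizer_gradient_bound:
  assumes S: "spd p S" "S \<noteq> 1\<^sub>m p" "sorted_eigs S om"
    and Th: "spd p Th" "sorted_eigs Th la" and between: "\<And>i. i < p \<Longrightarrow> lam_min om i \<le> la ! i"
  shows "frob_norm (S - minv Th) \<le> sqrt (\<Sum>i<p. lam_min om i powr (-2)) + frob_norm S"
proof -
  obtain V where V: "spectral_decomp p V ((!) la) Th" using spd_spectral_decomp[OF Th] .
  have "minv Th \<in> carrier_mat p p"
    using spectral_decomp_carrier[OF spectral_decomp_minv[OF V]] spd_sorted_eigs_pos[OF Th]
    by (simp add: less_imp_neq[symmetric])
  hence "frob_norm (S - minv Th) \<le> frob_norm S + frob_norm (minv Th)"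
    using S(1) by (intro frob_norm_minus_le) (auto simp: spd_def)
  moreover have "frob_norm (minv Th) \<le> sqrt (\<Sum>i<p. lam_min om i powr (-2))"
    using frob_norm_minv_le[OF Th] lam_min_pos[OF S] between by blast
  ultimately show ?thesis by simp
qed

theorem mainTheorem17:
  fixes p :: nat and S :: "real mat" and om :: "real list"
  assumes S_spd: "spd p S"
    and S_ne_I: "S \<noteq> 1\<^sub>m p"
    and om: "sorted_eigs S om"
  shows "(\<forall>i<p. rval om i > ln (om ! (p - 1 - i)) + 1)
    \<and> (\<forall>i<p. \<exists>a b. 0 < a \<and> a < b \<and> root_set om i = {a, b})
    \<and> fobj S (1\<^sub>m p) = mtrace S
    \<and> (\<forall>Th la. spd p Th \<and> sorted_eigs Th la \<and>
          (\<exists>i<p. la ! i \<notin> {lam_min om i .. lam_max om i})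
          \<longrightarrow> fobj S Th > fobj S (1\<^sub>m p))
    \<and> (\<forall>C Th la. C \<subseteq> {A. spd p A} \<and> 1\<^sub>m p \<in> C \<and> Th \<in> C \<and>
          (\<forall>A\<in>C. fobj S Th \<le> fobj S A) \<and> sorted_eigs Th la
          \<longrightarrow> (\<forall>i<p. la ! i \<in> {lam_min om i .. lam_max om i})
            \<and> frob_norm (S - minv Th)
                \<le> sqrt (\<Sum>i<p. (lam_min om i) powr (-2)) + frob_norm S)"
proof -
  note S = S_spd S_ne_I om
  have fobj_I: "fobj S (1\<^sub>m p) = mtrace S" using S_spd by (simp add: spd_def fobj_one)
  have roots: "\<exists>a b. 0 < a \<and> a < b \<and> root_set om i = {a, b}" if i: "i < p" for i
    by (rule spd_root_set_two_roots[OF S i]) blast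
  have beyond_roots: "fobj S (1\<^sub>m p) < fobj S Th"
    if "spd p Th" "sorted_eigs Th la" "i < p" "la ! i \<notin> {lam_min om i .. lam_max om i}" for Th la i
    using fobj_gt_mtrace[OF S that] fobj_I by simp
  have minimizer: "(\<forall>i<p. la ! i \<in> {lam_min om i .. lam_max om i})
      \<and> frob_norm (S - minv Th) \<le> sqrt (\<Sum>i<p. lam_min om i powr (-2)) + frob_norm S"
    if C: "C \<subseteq> {A. spd p A}" "1\<^sub>m p \<in> C" "Th \<in> C" "\<forall>A\<in>C. fobj S Th \<le> fobj S A"
      and la: "sorted_eigs Th la" for C Th la
    using minimizer_eigenvalues_between_roots[OF S C la] minimizer_gradient_bound[OF S _ la] C(1,3)
    by auto
  show ?thesis using rval_gt[OF S] roots fobj_I beyond_roots minimizer by blast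
qed

end
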